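(* Let $\Omega\subset\mathbb{R}^2$ be a bounded domain with triangulation $\Omega_h$, $V_h^0$ the space of continuous piecewise affine functions on $\Omega_h$ vanishing on the boundary, $1<p<\infty$, $g>0$, $\gamma>0$, and $u_h\in V_h^0$. Define, for $v_h,w_h\in V_h^0$, $$\begin{aligned}(J'_{\gamma,h})^{\circ}(u_h)(v_h,w_h)=&\int_{\Omega_h}|\nabla u_h|^{p-2}\nabla v_h\cdot\nabla w_h\,dx+(p-2)\int_{\Omega_h}|\nabla u_h|^{p-4}(\nabla u_h\cdot\nabla v_h)(\nabla u_h\cdot\nabla w_h)\,dx\\&+\int_{A_{\gamma,h}}g\frac{\nabla v_h\cdot\nabla w_h}{|\nabla u_h|}\,dx-\int_{A_{\gamma,h}}g\frac{(\nabla u_h\cdot\nabla v_h)(\nabla u_h\cdot\nabla w_h)}{|\nabla u_h|^3}\,dx+\int_{\Omega_h\setminus A_{\gamma,h}}\gamma\,\nabla v_h\cdot\nabla w_h\,dx,\end{aligned}$$ where $A_{\gamma,h}=\{x\in\Omega_h:\gamma|\nabla u_h(x)|\ge g\}$. Then $(J'_{\gamma,h})^{\circ}(u_h)$ is positive definite, i.e. $(J'_{\gamma,h})^{\circ}(u_h)(w_h,w_h)>0$ for all $w_h\in V_h^0\setminus\{0\}$.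
   Context: $(J'_{\gamma,h})^\circ$ is the slanting function (slant derivative) of the derivative of the discrete Huber-regularized functional $J_{\gamma,h}(u_h)=\frac1p\int_{\Omega_h}|\nabla u_h|^p+\int_{\Omega_h}\psi_\gamma(\nabla u_h)-\int_{\Omega_h}fu_h$, where $\psi_\gamma(z)=g|z|-\frac{g^2}{2\gamma}$ if $|z|>g/\gamma$ and $\frac\gamma2|z|^2$ otherwise. *)

theory Defs
  imports "HOL-Analysis.Analysis"
begin

text \<open>A triangle is given by its set of three non-collinear vertices; the closed
  triangle is its convex hull.\<close>
definition is_triangle :: "(real^2) set \<Rightarrow> bool" where
  "is_triangle V \<longleftrightarrow> card V = 3 \<and> \<not> collinear V"

definition triangulation :: "(real^2) set set \<Rightarrow> (real^2) set \<Rightarrow> bool" where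
  "triangulation T \<Omega> \<longleftrightarrow>
     finite T \<and> T \<noteq> {} \<and> (\<forall>V\<in>T. is_triangle V) \<and>
     (\<forall>V1\<in>T. \<forall>V2\<in>T. V1 \<noteq> V2 \<longrightarrow>
        convex hull V1 \<inter> convex hull V2 = convex hull (V1 \<inter> V2)) \<and>
     \<Omega> = interior (\<Union>V\<in>T. convex hull V)"

text \<open>V_h^0: continuous, affine on every triangle, vanishing on the boundary
  (functions are extended by zero outside \<Omega>).\<close>
definition Vh0 :: "(real^2) set set \<Rightarrow> (real^2) set \<Rightarrow> ((real^2) \<Rightarrow> real) set" where
  "Vh0 T \<Omega> = {u. continuous_on UNIV u \<and>
     (\<forall>V\<in>T. \<exists>a b. \<forall>x\<in>convex hull V. u x = a \<bullet> x + b) \<and>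
     (\<forall>x. x \<notin> \<Omega> \<longrightarrow> u x = 0)}"

text \<open>Pointwise gradient (defined a.e., namely in the interior of every triangle).\<close>
definition grad :: "((real^2) \<Rightarrow> real) \<Rightarrow> real^2 \<Rightarrow> real^2" where
  "grad u x = (if u differentiable (at x)
               then (\<chi> i. frechet_derivative u (at x) (axis i 1)) else 0)"

definition active_set :: "real \<Rightarrow> real \<Rightarrow> (real^2) set \<Rightarrow> ((real^2) \<Rightarrow> real) \<Rightarrow> (real^2) set" where
  "active_set g \<gamma> \<Omega> u = {x \<in> \<Omega>. \<gamma> * norm (grad u x) \<ge> g}"

definition slant_J :: "real \<Rightarrow> real \<Rightarrow> real \<Rightarrow> (real^2) set \<Rightarrow>
    ((real^2) \<Rightarrow> real) \<Rightarrow> ((real^2) \<Rightarrow> real) \<Rightarrow> ((real^2) \<Rightarrow> real) \<Rightarrow> real" where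
  "slant_J p g \<gamma> \<Omega> u v w =
     (let A = active_set g \<gamma> \<Omega> u in
        integral \<Omega> (\<lambda>x. norm (grad u x) powr (p - 2) * (grad v x \<bullet> grad w x))
      + (p - 2) * integral \<Omega> (\<lambda>x. norm (grad u x) powr (p - 4)
                     * (grad u x \<bullet> grad v x) * (grad u x \<bullet> grad w x))
      + integral A (\<lambda>x. g * (grad v x \<bullet> grad w x) / norm (grad u x))
      - integral A (\<lambda>x. g * (grad u x \<bullet> grad v x) * (grad u x \<bullet> grad w x)
                          / norm (grad u x) ^ 3)
      + integral (\<Omega> - A) (\<lambda>x. \<gamma> * (grad v x \<bullet> grad w x)))"

end

theory Submission
  imports Defs
begin

text \<open>The gradients of u and w are constant on each open triangle, so the slant derivative
  is the finite sum over the triangles of (area) times a pointwise quadratic form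
  E(\<nabla>u, \<nabla>w). By Cauchy--Schwarz the p-Laplacian part of E is at least
  min(1, p-1) |\<nabla>u|^(p-2) |\<nabla>w|^2 and the Huber part is nonnegative, so
  E(a, c) > 0 whenever c \<noteq> 0. Finally w \<noteq> 0 forces a nonzero slope on some triangle:
  otherwise the continuous w takes finitely many values, hence is constant, and it vanishes
  outside the bounded set \<Omega>.\<close>

subsection \<open>The pointwise quadratic form\<close>

text \<open>The integrand of the slant derivative (J'_{\<gamma>,h})\<degree>(u)(w,w) at a point where
  \<nabla>u = a and \<nabla>w = c; the active-set indicator becomes the condition g \<le> \<gamma>|a|.\<close>
definition slant_density :: "real \<Rightarrow> real \<Rightarrow> real \<Rightarrow> 'a::real_inner \<Rightarrow> 'a \<Rightarrow> real" where
  "slant_density p g \<gamma> a c =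
     norm a powr (p - 2) * (c \<bullet> c) + (p - 2) * (norm a powr (p - 4) * (a \<bullet> c) * (a \<bullet> c))
     + (if g \<le> \<gamma> * norm a then g * (c \<bullet> c) / norm a - g * (a \<bullet> c) * (a \<bullet> c) / norm a ^ 3
        else \<gamma> * (c \<bullet> c))"

lemma inner_square_le_norms:
  fixes a c :: "'a::real_inner"
  shows "(a \<bullet> c) * (a \<bullet> c) \<le> (norm a * norm a) * (c \<bullet> c)"
proof -
  have "\<bar>a \<bullet> c\<bar> * \<bar>a \<bullet> c\<bar> \<le> (norm a * norm c) * (norm a * norm c)"
    using Cauchy_Schwarz_ineq2 by (intro mult_mono) auto
  then show ?thesis by (simp add: dot_square_norm power2_eq_square algebra_simps)
qed

lemma p_laplacian_form_ge:
  fixes a c :: "'a::real_inner"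
  assumes "1 < p" and "a \<noteq> 0"
  shows "min 1 (p - 1) * norm a powr (p - 2) * (c \<bullet> c)
    \<le> norm a powr (p - 2) * (c \<bullet> c) + (p - 2) * (norm a powr (p - 4) * (a \<bullet> c) * (a \<bullet> c))"
proof -
  define n where "n = norm a"
  have n: "0 < n" using assms(2) by (simp add: n_def)
  have powr4: "n powr (p - 4) = n powr (p - 2) / (n * n)"
    using n by (simp add: powr_diff powr_numeral divide_simps eval_nat_numeral)
  have cs: "(a \<bullet> c) * (a \<bullet> c) / (n * n) \<le> c \<bullet> c"
    using inner_square_le_norms[of a c] n by (simp add: n_def divide_simps mult.commute)
  have "min 1 (p - 1) * (c \<bullet> c) \<le> c \<bullet> c + (p - 2) * ((a \<bullet> c) * (a \<bullet> c) / (n * n))"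
  proof (cases "2 \<le> p")
    case True
    then show ?thesis by (auto simp: min_def intro!: add_increasing2 mult_nonneg_nonneg)
  next
    case False
    then have "(p - 2) * (c \<bullet> c) \<le> (p - 2) * ((a \<bullet> c) * (a \<bullet> c) / (n * n))"
      using cs by (intro mult_left_mono_neg) auto
    then show ?thesis using False by (simp add: min_def algebra_simps)
  qed
  then have "n powr (p - 2) * (min 1 (p - 1) * (c \<bullet> c))
      \<le> n powr (p - 2) * (c \<bullet> c + (p - 2) * ((a \<bullet> c) * (a \<bullet> c) / (n * n)))"
    by (intro mult_left_mono) auto
  then show ?thesis by (simp add: n_def[symmetric] powr4 algebra_simps)
qed

text \<open>For a = 0 both sides are 0 because division by 0 yields 0.\<close>
lemma huber_cross_term_le:
  fixes a c :: "'a::real_inner"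
  assumes "0 \<le> g"
  shows "g * (a \<bullet> c) * (a \<bullet> c) / norm a ^ 3 \<le> g * (c \<bullet> c) / norm a"
proof (cases "a = 0")
  case False
  then have n: "0 < norm a" by simp
  have "g * ((a \<bullet> c) * (a \<bullet> c)) / norm a ^ 3 \<le> g * ((norm a * norm a) * (c \<bullet> c)) / norm a ^ 3"
    using inner_square_le_norms[of a c] assms n by (intro divide_right_mono mult_left_mono) auto
  also have "\<dots> = g * (c \<bullet> c) / norm a"
    using n by (simp add: power3_eq_cube divide_simps)
  finally show ?thesis by simp
qed simp

text \<open>At a = 0 the term norm a powr (p - 2) is 0 (Isabelle's 0 powr x = 0), not the
  singular value |0|^(p-2) of the paper for p < 2; positivity then comes from the inactive
  term \<gamma> |c|^2, since g > 0.\<close>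
lemma slant_density_pos:
  fixes a c :: "'a::real_inner"
  assumes "1 < p" and "0 < g" and "0 < \<gamma>" and "c \<noteq> 0"
  shows "0 < slant_density p g \<gamma> a c"
proof (cases "a = 0")
  case True
  then show ?thesis using assms by (simp add: slant_density_def)
next
  case False
  have huber: "0 \<le> (if g \<le> \<gamma> * norm a
      then g * (c \<bullet> c) / norm a - g * (a \<bullet> c) * (a \<bullet> c) / norm a ^ 3 else \<gamma> * (c \<bullet> c))"
    using huber_cross_term_le[of g a c] assms by simp
  have "0 < min 1 (p - 1) * norm a powr (p - 2) * (c \<bullet> c)"
    using assms False by simp
  then show ?thesis
    using p_laplacian_form_ge[OF assms(1) False, of c] huber
    unfolding slant_density_def by linarith
qed

lemma slant_density_nonneg:
  fixes a c :: "'a::real_inner"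
  assumes "1 < p" and "0 < g" and "0 < \<gamma>"
  shows "0 \<le> slant_density p g \<gamma> a c"
proof (cases "c = 0")
  case False
  then show ?thesis by (rule less_imp_le[OF slant_density_pos[OF assms]])
qed (simp add: slant_density_def)

lemma integral_active_set:
  fixes f :: "real^2 \<Rightarrow> real"
  shows "integral (active_set g \<gamma> \<Omega> u) f
     = integral \<Omega> (\<lambda>x. if g \<le> \<gamma> * norm (grad u x) then f x else 0)"
proof -
  have "active_set g \<gamma> \<Omega> u = {x. g \<le> \<gamma> * norm (grad u x)} \<inter> \<Omega>"
    by (auto simp: active_set_def)
  then show ?thesis using integral_restrict_Int[of \<Omega> "{x. g \<le> \<gamma> * norm (grad u x)}" f] by simp
qed

lemma integral_inactive_set:
  fixes f :: "real^2 \<Rightarrow> real"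
  shows "integral (\<Omega> - active_set g \<gamma> \<Omega> u) f
     = integral \<Omega> (\<lambda>x. if g \<le> \<gamma> * norm (grad u x) then 0 else f x)"
proof -
  have "\<Omega> - active_set g \<gamma> \<Omega> u = {x. \<not> g \<le> \<gamma> * norm (grad u x)} \<inter> \<Omega>"
    by (auto simp: active_set_def)
  moreover have "(\<lambda>x. if g \<le> \<gamma> * norm (grad u x) then 0 else f x)
      = (\<lambda>x. if x \<in> {x. \<not> g \<le> \<gamma> * norm (grad u x)} then f x else 0)"
    by auto
  ultimately show ?thesis
    using integral_restrict_Int[of \<Omega> "{x. \<not> g \<le> \<gamma> * norm (grad u x)}" f] by simp
qed

lemma slant_J_eq_integral_density:
  assumes "\<And>F :: real^2 \<Rightarrow> real^2 \<Rightarrow> real. (\<lambda>x. F (grad u x) (grad w x)) integrable_on \<Omega>"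
  shows "slant_J p g \<gamma> \<Omega> u w w = integral \<Omega> (\<lambda>x. slant_density p g \<gamma> (grad u x) (grad w x))"
proof -
  define active where "active a \<longleftrightarrow> g \<le> \<gamma> * norm a" for a :: "real^2"
  define F1 where "F1 a c = norm a powr (p - 2) * (c \<bullet> c)" for a c :: "real^2"
  define F2 where "F2 a c = norm a powr (p - 4) * (a \<bullet> c) * (a \<bullet> c)" for a c :: "real^2"
  define F3 where "F3 a c = (if active a then g * (c \<bullet> c) / norm a else 0)" for a c :: "real^2"
  define F4 where "F4 a c = (if active a then g * (a \<bullet> c) * (a \<bullet> c) / norm a ^ 3 else 0)"
    for a c :: "real^2"
  define F5 where "F5 a c = (if active a then 0 else \<gamma> * (c \<bullet> c))" for a c :: "real^2"
  let ?I = "\<lambda>F. integral \<Omega> (\<lambda>x. F (grad u x) (grad w x))"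
  have "((\<lambda>x. F1 (grad u x) (grad w x) + (p - 2) * F2 (grad u x) (grad w x)
      + F3 (grad u x) (grad w x) - F4 (grad u x) (grad w x) + F5 (grad u x) (grad w x))
      has_integral (?I F1 + (p - 2) * ?I F2 + ?I F3 - ?I F4 + ?I F5)) \<Omega>"
    by (intro has_integral_add has_integral_diff has_integral_mult_right integrable_integral
        assms[of F1] assms[of F2] assms[of F3] assms[of F4] assms[of F5])
  moreover have "F1 a c + (p - 2) * F2 a c + F3 a c - F4 a c + F5 a c = slant_density p g \<gamma> a c"
    for a c
    by (simp add: F1_def F2_def F3_def F4_def F5_def active_def slant_density_def)
  ultimately have "integral \<Omega> (\<lambda>x. slant_density p g \<gamma> (grad u x) (grad w x))
      = ?I F1 + (p - 2) * ?I F2 + ?I F3 - ?I F4 + ?I F5"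
    by (simp add: integral_unique)
  then show ?thesis
    by (simp add: slant_J_def Let_def integral_active_set integral_inactive_set
        F1_def F2_def F3_def F4_def F5_def active_def del: integral_mult_right)
qed

subsection \<open>Triangles and piecewise constant integrands\<close>

lemma is_triangle_finite: "is_triangle V \<Longrightarrow> finite V"
  unfolding is_triangle_def by (intro card_ge_0_finite) simp

lemma compact_convex_hull_triangle: "is_triangle V \<Longrightarrow> compact (convex hull V)"
  by (simp add: is_triangle_finite finite_imp_compact_convex_hull)

lemma interior_convex_hull_triangle_nonempty:
  assumes "is_triangle V"
  shows "interior (convex hull V) \<noteq> {}"
proof -
  have card: "card V = Suc DIM(real^2)" and "\<not> collinear V"
    using assms by (auto simp: is_triangle_def)
  obtain x y z where "V = {x, y, z}"
    using card by (auto simp: card_3_iff)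
  then have "\<not> affine_dependent V"
    using \<open>\<not> collinear V\<close> collinear_3_eq_affine_dependent[of x y z] by simp
  then show ?thesis
    using interior_convex_hull_eq_empty[OF card] by simp
qed

lemma measure_triangle_pos:
  assumes "is_triangle V"
  shows "0 < measure lebesgue (convex hull V)"
proof -
  have "\<not> negligible (convex hull V)"
    using interior_convex_hull_triangle_nonempty[OF assms] negligible_convex_interior by blast
  moreover have "convex hull V \<in> lmeasurable"
    using compact_convex_hull_triangle[OF assms] by (rule lmeasurable_compact)
  ultimately have "measure lebesgue (convex hull V) \<noteq> 0"
    by (simp add: negligible_iff_measure)
  then show ?thesis
    using measure_nonneg[of lebesgue "convex hull V"] by linarith
qed

lemma triangulation_finite: "triangulation T \<Omega> \<Longrightarrow> finite T"
  by (simp add: triangulation_def)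

lemma triangulation_triangle: "triangulation T \<Omega> \<Longrightarrow> V \<in> T \<Longrightarrow> is_triangle V"
  by (simp add: triangulation_def)

lemma triangulation_domain: "triangulation T \<Omega> \<Longrightarrow> \<Omega> = interior (\<Union>V\<in>T. convex hull V)"
  by (simp add: triangulation_def)

lemma triangulation_interior_subset:
  assumes "triangulation T \<Omega>" and "V \<in> T"
  shows "interior (convex hull V) \<subseteq> \<Omega>"
  unfolding triangulation_domain[OF assms(1)] using assms(2) by (intro interior_mono) blast

lemma triangulation_domain_subset: "triangulation T \<Omega> \<Longrightarrow> \<Omega> \<subseteq> (\<Union>V\<in>T. convex hull V)"
  using triangulation_domain interior_subset by blast

text \<open>Two distinct triangles meet in the hull of at most two common vertices.\<close>
lemma triangulation_Int_negligible:
  assumes tri: "triangulation T \<Omega>" and "V1 \<in> T" and "V2 \<in> T" and "V1 \<noteq> V2"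
  shows "negligible (convex hull V1 \<inter> convex hull V2)"
proof -
  have V1: "is_triangle V1" and V2: "is_triangle V2"
    using assms triangulation_triangle by blast+
  have hull_Int: "convex hull V1 \<inter> convex hull V2 = convex hull (V1 \<inter> V2)"
    using assms unfolding triangulation_def by blast
  have "\<not> V1 \<subseteq> V2"
    using card_subset_eq[OF is_triangle_finite[OF V2], of V1] V1 V2 \<open>V1 \<noteq> V2\<close>
    by (auto simp: is_triangle_def)
  then have "card (V1 \<inter> V2) < card V1"
    using is_triangle_finite[OF V1] by (intro psubset_card_mono) auto
  then have "interior (convex hull (V1 \<inter> V2)) = {}"
    using V1 is_triangle_finite[OF V1]
    by (intro empty_interior_convex_hull) (auto simp: is_triangle_def)
  then show ?thesis
    unfolding hull_Int using negligible_convex_interior by blast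
qed

lemma has_integral_const_on_interior:
  fixes f :: "'a::euclidean_space \<Rightarrow> real"
  assumes "convex S" and "compact S" and "\<And>x. x \<in> interior S \<Longrightarrow> f x = c"
  shows "(f has_integral c * measure lebesgue S) S"
proof (rule has_integral_spike[OF negligible_convex_frontier[OF \<open>convex S\<close>]])
  have "closed S"
    using \<open>compact S\<close> by (rule compact_imp_closed)
  then show "f x = c" if "x \<in> S - frontier S" for x
    using that assms(3) by (simp add: frontier_def)
  have S: "S \<in> lmeasurable"
    using \<open>compact S\<close> by (rule lmeasurable_compact)
  then have "(\<lambda>x. 1::real) integrable_on S"
    by (simp add: lmeasurable_iff_integrable_on)
  then have one: "((\<lambda>x. 1) has_integral measure lebesgue S) S"
    unfolding lmeasure_integral[OF S] by (rule integrable_integral)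
  show "((\<lambda>x. c) has_integral c * measure lebesgue S) S"
    using has_integral_mult_right[OF one, of c] by simp
qed

lemma triangulation_boundary_negligible:
  assumes "triangulation T \<Omega>"
  shows "negligible ((\<Union>V\<in>T. convex hull V) - \<Omega>)"
proof (rule negligible_subset)
  show "negligible (\<Union>V\<in>T. frontier (convex hull V))"
    using triangulation_finite[OF assms] by (intro negligible_Union) (auto simp: negligible_convex_frontier)
  show "(\<Union>V\<in>T. convex hull V) - \<Omega> \<subseteq> (\<Union>V\<in>T. frontier (convex hull V))"
  proof
    fix x assume "x \<in> (\<Union>V\<in>T. convex hull V) - \<Omega>"
    then obtain V where V: "V \<in> T" and x: "x \<in> convex hull V" "x \<notin> \<Omega>" by blast
    then have "x \<notin> interior (convex hull V)"
      using triangulation_interior_subset[OF assms V] by blast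
    moreover have "closed (convex hull V)"
      using triangulation_triangle[OF assms V] by (simp add: compact_convex_hull_triangle compact_imp_closed)
    ultimately have "x \<in> frontier (convex hull V)"
      using x by (simp add: frontier_def)
    then show "x \<in> (\<Union>V\<in>T. frontier (convex hull V))"
      using V by blast
  qed
qed

lemma has_integral_piecewise_constant:
  fixes f :: "real^2 \<Rightarrow> real"
  assumes tri: "triangulation T \<Omega>"
    and f: "\<And>V x. V \<in> T \<Longrightarrow> x \<in> interior (convex hull V) \<Longrightarrow> f x = c V"
  shows "(f has_integral (\<Sum>V\<in>T. c V * measure lebesgue (convex hull V))) \<Omega>"
proof -
  have "(f has_integral (\<Sum>V\<in>T. c V * measure lebesgue (convex hull V))) (\<Union>V\<in>T. convex hull V)"
  proof (rule has_integral_UN)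
    show "finite T" using triangulation_finite[OF tri] .
    show "(f has_integral c V * measure lebesgue (convex hull V)) (convex hull V)" if "V \<in> T" for V
      using that f triangulation_triangle[OF tri]
      by (intro has_integral_const_on_interior) (auto simp: compact_convex_hull_triangle)
    show "pairwise (\<lambda>V V'. negligible (convex hull V \<inter> convex hull V')) T"
      using triangulation_Int_negligible[OF tri] by (auto simp: pairwise_def)
  qed
  moreover have "negligible {x \<in> (\<Union>V\<in>T. convex hull V) - \<Omega>. f x \<noteq> 0}"
    by (rule negligible_subset[OF triangulation_boundary_negligible[OF tri]]) blast
  moreover have "negligible {x \<in> \<Omega> - (\<Union>V\<in>T. convex hull V). f x \<noteq> 0}"
    by (rule negligible_subset[OF negligible_empty]) (use triangulation_domain_subset[OF tri] in blast)
  ultimately show ?thesis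
    using has_integral_spike_set_eq by blast
qed

subsection \<open>Gradients of finite element functions\<close>

lemma grad_eq_affine_slope:
  fixes u :: "real^2 \<Rightarrow> real"
  assumes "\<forall>y\<in>S. u y = a \<bullet> y + b" and "x \<in> interior S"
  shows "grad u x = a"
proof -
  have "((\<lambda>y. a \<bullet> y + b) has_derivative (\<lambda>h. a \<bullet> h)) (at x)"
    by (auto intro!: derivative_eq_intros)
  then have "(u has_derivative (\<lambda>h. a \<bullet> h)) (at x)"
    by (rule has_derivative_transform_within_open[OF _ open_interior assms(2)])
      (use assms(1) interior_subset in force)
  then have "u differentiable (at x)" and "frechet_derivative u (at x) = (\<lambda>h. a \<bullet> h)"
    using differentiable_def frechet_derivative_at by metis+
  then show ?thesis by (simp add: grad_def vec_eq_iff inner_axis)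
qed

lemma Vh0_affine_on_triangles:
  assumes "u \<in> Vh0 T \<Omega>"
  obtains a b where "\<And>V x. V \<in> T \<Longrightarrow> x \<in> convex hull V \<Longrightarrow> u x = a V \<bullet> x + b V"
proof -
  have "\<forall>V\<in>T. \<exists>a b. \<forall>x\<in>convex hull V. u x = a \<bullet> x + b"
    using assms by (simp add: Vh0_def)
  then show ?thesis using that by metis
qed

lemma Vh0_grad_piecewise_constant:
  assumes "u \<in> Vh0 T \<Omega>"
  obtains a where "\<And>V x. V \<in> T \<Longrightarrow> x \<in> interior (convex hull V) \<Longrightarrow> grad u x = a V"
proof -
  obtain a b where "\<And>V x. V \<in> T \<Longrightarrow> x \<in> convex hull V \<Longrightarrow> u x = a V \<bullet> x + b V"
    using Vh0_affine_on_triangles[OF assms] by blast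
  then show ?thesis
    using that grad_eq_affine_slope by blast
qed

lemma Vh0_finite_range_if_slopes_zero:
  assumes tri: "triangulation T \<Omega>" and w: "w \<in> Vh0 T \<Omega>"
    and slope0: "\<And>V x. V \<in> T \<Longrightarrow> x \<in> interior (convex hull V) \<Longrightarrow> grad w x = 0"
  shows "finite (range w)"
proof -
  obtain a b where ab: "\<And>V x. V \<in> T \<Longrightarrow> x \<in> convex hull V \<Longrightarrow> w x = a V \<bullet> x + b V"
    using Vh0_affine_on_triangles[OF w] by blast
  have a0: "a V = 0" if V: "V \<in> T" for V
  proof -
    obtain x where x: "x \<in> interior (convex hull V)"
      using interior_convex_hull_triangle_nonempty[OF triangulation_triangle[OF tri V]] by blast
    then have "grad w x = a V"
      using ab V by (intro grad_eq_affine_slope[of "convex hull V"]) auto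
    then show ?thesis using slope0[OF V x] by simp
  qed
  have "range w \<subseteq> insert 0 (b ` T)"
  proof
    fix y assume "y \<in> range w"
    then obtain x where y: "y = w x" by blast
    show "y \<in> insert 0 (b ` T)"
    proof (cases "x \<in> \<Omega>")
      case True
      then obtain V where "V \<in> T" "x \<in> convex hull V"
        using triangulation_domain_subset[OF tri] by blast
      then show ?thesis using ab a0 y by simp
    next
      case False
      then show ?thesis using w y by (simp add: Vh0_def)
    qed
  qed
  then show ?thesis
    using triangulation_finite[OF tri] finite_subset by blast
qed

lemma Vh0_eq_zero_if_finite_range:
  assumes "bounded \<Omega>" and w: "w \<in> Vh0 T \<Omega>" and "finite (range w)"
  shows "w = (\<lambda>x. 0)"
proof -
  have "continuous_on UNIV w" using w by (simp add: Vh0_def)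
  then have "w constant_on UNIV"
    using continuous_finite_range_constant[OF connected_UNIV] \<open>finite (range w)\<close> by blast
  then obtain k where k: "\<And>x. w x = k"
    by (auto simp: constant_on_def)
  have "\<Omega> \<noteq> UNIV"
    using \<open>bounded \<Omega>\<close> not_bounded_UNIV by blast
  then obtain x0 where "x0 \<notin> \<Omega>" by blast
  then have "w x0 = 0" using w by (simp add: Vh0_def)
  then have "k = 0" using k by simp
  then show ?thesis using k by auto
qed

lemma Vh0_nonzero_slope:
  assumes tri: "triangulation T \<Omega>" and "bounded \<Omega>" and w: "w \<in> Vh0 T \<Omega>"
    and "w \<noteq> (\<lambda>x. 0)"
    and slope: "\<And>V x. V \<in> T \<Longrightarrow> x \<in> interior (convex hull V) \<Longrightarrow> grad w x = c V"
  obtains V where "V \<in> T" and "c V \<noteq> 0"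
proof (rule ccontr)
  assume "\<not> thesis"
  then have c0: "c V = 0" if "V \<in> T" for V
    using that \<open>V \<in> T \<Longrightarrow> c V \<noteq> 0 \<Longrightarrow> thesis\<close> by blast
  have "finite (range w)"
    by (rule Vh0_finite_range_if_slopes_zero[OF tri w]) (simp add: slope c0)
  then show False
    using Vh0_eq_zero_if_finite_range[OF \<open>bounded \<Omega>\<close> w] \<open>w \<noteq> (\<lambda>x. 0)\<close> by blast
qed

lemma slant_J_eq_sum:
  assumes tri: "triangulation T \<Omega>"
    and a: "\<And>V x. V \<in> T \<Longrightarrow> x \<in> interior (convex hull V) \<Longrightarrow> grad u x = a V"
    and b: "\<And>V x. V \<in> T \<Longrightarrow> x \<in> interior (convex hull V) \<Longrightarrow> grad w x = b V"
  shows "slant_J p g \<gamma> \<Omega> u w w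
    = (\<Sum>V\<in>T. slant_density p g \<gamma> (a V) (b V) * measure lebesgue (convex hull V))"
proof -
  have integral: "((\<lambda>x. F (grad u x) (grad w x))
      has_integral (\<Sum>V\<in>T. F (a V) (b V) * measure lebesgue (convex hull V))) \<Omega>"
    for F :: "real^2 \<Rightarrow> real^2 \<Rightarrow> real"
    using a b by (intro has_integral_piecewise_constant[OF tri]) auto
  have "slant_J p g \<gamma> \<Omega> u w w = integral \<Omega> (\<lambda>x. slant_density p g \<gamma> (grad u x) (grad w x))"
    using integral by (intro slant_J_eq_integral_density has_integral_integrable)
  also have "\<dots> = (\<Sum>V\<in>T. slant_density p g \<gamma> (a V) (b V) * measure lebesgue (convex hull V))"
    using integral by (rule integral_unique)
  finally show ?thesis .
qed

theorem proposition7: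
  fixes T :: "(real^2) set set" and \<Omega> :: "(real^2) set"
    and p g \<gamma> :: real and u :: "(real^2) \<Rightarrow> real"
  assumes "triangulation T \<Omega>" and "connected \<Omega>" and "bounded \<Omega>"
    and "1 < p" and "0 < g" and "0 < \<gamma>"
    and "u \<in> Vh0 T \<Omega>"
  shows "\<forall>w \<in> Vh0 T \<Omega>. w \<noteq> (\<lambda>x. 0) \<longrightarrow> slant_J p g \<gamma> \<Omega> u w w > 0"
proof (intro ballI impI)
  fix w assume w: "w \<in> Vh0 T \<Omega>" and "w \<noteq> (\<lambda>x. 0)"
  note tri = assms(1)
  obtain a where a: "\<And>V x. V \<in> T \<Longrightarrow> x \<in> interior (convex hull V) \<Longrightarrow> grad u x = a V"
    using Vh0_grad_piecewise_constant[OF assms(7)] by blast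
  obtain b where b: "\<And>V x. V \<in> T \<Longrightarrow> x \<in> interior (convex hull V) \<Longrightarrow> grad w x = b V"
    using Vh0_grad_piecewise_constant[OF w] by blast
  obtain V0 where V0: "V0 \<in> T" and "b V0 \<noteq> 0"
    using Vh0_nonzero_slope[where c=b, OF tri assms(3) w \<open>w \<noteq> (\<lambda>x. 0)\<close> b] by blast
  let ?m = "\<lambda>V. measure lebesgue (convex hull V)"
  have "0 < (\<Sum>V\<in>T. slant_density p g \<gamma> (a V) (b V) * ?m V)"
  proof (rule sum_pos2[OF _ V0])
    show "finite T" using triangulation_finite[OF tri] .
    show "0 < slant_density p g \<gamma> (a V0) (b V0) * ?m V0"
      using slant_density_pos[OF assms(4-6) \<open>b V0 \<noteq> 0\<close>]
        measure_triangle_pos[OF triangulation_triangle[OF tri V0]] by simp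
    show "0 \<le> slant_density p g \<gamma> (a V) (b V) * ?m V" for V
      by (intro mult_nonneg_nonneg slant_density_nonneg[OF assms(4-6)] measure_nonneg)
  qed
  then show "0 < slant_J p g \<gamma> \<Omega> u w w"
    using slant_J_eq_sum[OF tri a b] by simp
qed

end
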